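(* Fix an integer $k\ge 2$. Then \[ \lim_{r\to\infty}\gamma^{B}_{k,r}=\gamma^{B}_{k}\qquad\text{and}\qquad \lim_{r\to\infty}\gamma_{k,r}=\gamma_{k}, \] where the quantities are as defined in the context (in particular, both limits over $r$ exist).
   Context: Let $\Sigma=\{0,1,\dots,k-1\}$. For strings $u=u_1\cdots u_n$, $v=v_1\cdots v_n\in\Sigma^n$, let $\mathbf{L}(u,v)$ be the length of a longest common subsequence of $u$ and $v$, i.e. the largest $m$ such that there are indices $1\le i_1<\dots<i_m\le n$ and $1\le j_1<\dots<j_m\le n$ with $u_{i_a}=v_{j_a}$ for all $a$. For an integer $r\ge 1$, let $\mathbf{L}_r(u,v)$ be the largest such $m$ subject to the additional requirement $|i_a-j_a|\le r$ for all $a$. Let $\mathbf{EL}^{(k)}_n=k^{-2n}\sum_{u,v\in\Sigma^n}\mathbf{L}(u,v)$ and $\mathbf{EL}_{n,k,r}=k^{-2n}\sum_{u,v\in\Sigma^n}\mathbf{L}_r(u,v)$. Bernoulli Matching model: let $(\epsilon_{ij})_{i,j\ge1}$ be independent random variables with $\Pr(\epsilon_{ij}=1)=1/k$, $\Pr(\epsilon_{ij}=0)=1-1/k$. Let $\mathbf{D}_{n}$ be the largest $m$ such that there are $1\le i_1<\dots<i_m\le n$, $1\le j_1<\dots<j_m\le n$ with $\epsilon_{i_aj_a}=1$ for all $a$, and let $\mathbf{R}_{n,r}$ be the largest such $m$ with the additional requirement $|i_a-j_a|\le r$ for all $a$. Let $\mathbf{EL}^{B(k)}_n=\mathbb{E}\,\mathbf{D}_n$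 and $\mathbf{EL}^{B}_{n,k,r}=\mathbb{E}\,\mathbf{R}_{n,r}$. All four sequences are superadditive in $n$, so the limits $\gamma_k=\lim_n \mathbf{EL}^{(k)}_n/n$, $\gamma_{k,r}=\lim_n\mathbf{EL}_{n,k,r}/n$, $\gamma^B_k=\lim_n\mathbf{EL}^{B(k)}_n/n$, $\gamma^B_{k,r}=\lim_n\mathbf{EL}^B_{n,k,r}/n$ exist. *)

theory Defs
  imports Complex_Main
begin

definition cs_ok :: "nat \<Rightarrow> (nat \<Rightarrow> nat \<Rightarrow> bool) \<Rightarrow> nat \<Rightarrow> (nat \<Rightarrow> nat) \<Rightarrow> (nat \<Rightarrow> nat) \<Rightarrow> bool" where
  "cs_ok n P m I J \<longleftrightarrow>
     (\<forall>a<m. 1 \<le> I a \<and> I a \<le> n \<and> 1 \<le> J a \<and> J a \<le> n \<and> P (I a) (J a)) \<and>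
     (\<forall>a b. a < b \<and> b < m \<longrightarrow> I a < I b \<and> J a < J b)"

definition lcsP :: "nat \<Rightarrow> (nat \<Rightarrow> nat \<Rightarrow> bool) \<Rightarrow> nat" where
  "lcsP n P = Max {m. \<exists>I J. cs_ok n P m I J}"

definition lcsPr :: "nat \<Rightarrow> nat \<Rightarrow> (nat \<Rightarrow> nat \<Rightarrow> bool) \<Rightarrow> nat" where
  "lcsPr n r P = Max {m. \<exists>I J. cs_ok n P m I J \<and> (\<forall>a<m. \<bar>int (I a) - int (J a)\<bar> \<le> int r)}"

text \<open>Strings of length n over the alphabet {0,...,k-1}; position i (1-based) is u ! (i-1).\<close>
definition strs :: "nat \<Rightarrow> nat \<Rightarrow> nat list set" where
  "strs k n = {u. length u = n \<and> set u \<subseteq> {..<k}}"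

definition L :: "nat list \<Rightarrow> nat list \<Rightarrow> nat" where
  "L u v = lcsP (length u) (\<lambda>i j. u ! (i - 1) = v ! (j - 1))"

definition Lr :: "nat \<Rightarrow> nat list \<Rightarrow> nat list \<Rightarrow> nat" where
  "Lr r u v = lcsPr (length u) r (\<lambda>i j. u ! (i - 1) = v ! (j - 1))"

definition EL :: "nat \<Rightarrow> nat \<Rightarrow> real" where
  "EL k n = (\<Sum>u\<in>strs k n. \<Sum>v\<in>strs k n. real (L u v)) / real k ^ (2 * n)"

definition ELr :: "nat \<Rightarrow> nat \<Rightarrow> nat \<Rightarrow> real" where
  "ELr n k r = (\<Sum>u\<in>strs k n. \<Sum>v\<in>strs k n. real (Lr r u v)) / real k ^ (2 * n)"

text \<open>Bernoulli matching model: configurations of (eps_ij)_{1<=i,j<=n}, encoded as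
  boolean matrices vanishing outside {1..n} x {1..n}, with their probabilities.\<close>
definition bmats :: "nat \<Rightarrow> (nat \<Rightarrow> nat \<Rightarrow> bool) set" where
  "bmats n = {e. \<forall>i j. e i j \<longrightarrow> i \<in> {1..n} \<and> j \<in> {1..n}}"

definition bweight :: "nat \<Rightarrow> nat \<Rightarrow> (nat \<Rightarrow> nat \<Rightarrow> bool) \<Rightarrow> real" where
  "bweight k n e =
     (let ones = card {(i, j). i \<in> {1..n} \<and> j \<in> {1..n} \<and> e i j}
      in (1 / real k) ^ ones * (1 - 1 / real k) ^ (n * n - ones))"

definition ELB :: "nat \<Rightarrow> nat \<Rightarrow> real" where
  "ELB k n = (\<Sum>e\<in>bmats n. bweight k n e * real (lcsP n e))"

definition ELBr :: "nat \<Rightarrow> nat \<Rightarrow> nat \<Rightarrow> real" where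
  "ELBr n k r = (\<Sum>e\<in>bmats n. bweight k n e * real (lcsPr n r e))"

definition gamma :: "nat \<Rightarrow> real" where
  "gamma k = lim (\<lambda>n. EL k n / real n)"

definition gamma_r :: "nat \<Rightarrow> nat \<Rightarrow> real" where
  "gamma_r k r = lim (\<lambda>n. ELr n k r / real n)"

definition gammaB :: "nat \<Rightarrow> real" where
  "gammaB k = lim (\<lambda>n. ELB k n / real n)"

definition gammaB_r :: "nat \<Rightarrow> nat \<Rightarrow> real" where
  "gammaB_r k r = lim (\<lambda>n. ELBr n k r / real n)"

end

(*
  Both models are laws M n of a random n x n matching matrix such that, inside the (n+m)-matrix,
  the upper-left n-block and the lower-right m-block are distributed like the n- and the m-matrix.
  Concatenating common subsequences of the two blocks makes the expected LCS, with or without the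
  window |i - j| <= r, superadditive in n; by Fekete's lemma gamma_{k,r} and gamma_k are then the
  suprema of EL_{n,k,r}/n and EL_n/n. The window is vacuous for n <= r + 1, so
  EL_{r+1}/(r+1) <= gamma_{k,r} <= gamma_k, and the left-hand side tends to gamma_k.
*)
theory Submission
  imports Defs "HOL-Probability.Product_PMF"
begin

section \<open>Fekete's lemma\<close>

lemma superadditive_mult:
  fixes a :: "nat \<Rightarrow> real"
  assumes superadditive: "\<And>m n. a m + a n \<le> a (m + n)" and nonneg: "\<And>n. 0 \<le> a n"
  shows "real q * a m \<le> a (q * m)"
proof (induction q)
  case 0
  then show ?case
    using nonneg by simp
next
  case (Suc q)
  then show ?case
    using superadditive[of "q * m" m] by (simp add: algebra_simps)
qed

lemma superadditive_lower_bound: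
  fixes a :: "nat \<Rightarrow> real"
  assumes superadditive: "\<And>m n. a m + a n \<le> a (m + n)" and nonneg: "\<And>n. 0 \<le> a n"
    and "0 < m"
  shows "(real n - real m) * a m \<le> real m * a n"
proof -
  define q where "q = n div m"
  have "n < q * m + m"
    using div_mult_mod_eq[of n m] mod_less_divisor[OF \<open>0 < m\<close>, of n] unfolding q_def by linarith
  then have "real n - real m \<le> real q * real m"
    by (simp add: algebra_simps flip: of_nat_mult of_nat_add)
  then have "(real n - real m) * a m \<le> real q * real m * a m"
    using nonneg by (rule mult_right_mono)
  also have "\<dots> = real m * (real q * a m)"
    by simp
  also have "real q * a m \<le> a (q * m)"
    using superadditive nonneg by (rule superadditive_mult)
  also have "a (q * m) \<le> a n"
    using superadditive[of "q * m" "n - q * m"] nonneg[of "n - q * m"]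
    by (simp add: q_def minus_mod_eq_mult_div [symmetric])
  finally show ?thesis
    using \<open>0 < m\<close> by (simp add: mult_left_mono)
qed

theorem fekete_superadditive:
  fixes a :: "nat \<Rightarrow> real"
  assumes superadditive: "\<And>m n. a m + a n \<le> a (m + n)" and nonneg: "\<And>n. 0 \<le> a n"
    and bounded: "\<And>n. a n \<le> c * real n"
  shows "(\<lambda>n. a n / real n) \<longlonglongrightarrow> (SUP n\<in>{0<..}. a n / real n)"
proof -
  have bdd: "bdd_above ((\<lambda>n. a n / real n) ` {0<..})"
    using bounded by (intro bdd_aboveI[of _ c]) (auto simp: divide_le_eq mult.commute)
  show ?thesis
  proof (rule order_tendstoI)
    fix y
    assume "y < (SUP n\<in>{0<..}. a n / real n)"
    then obtain m where "0 < m" "y < a m / real m"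
      using less_cSUP_iff[OF _ bdd] by auto
    moreover have "(\<lambda>n. (1 - real m / real n) * (a m / real m)) \<longlonglongrightarrow> (1 - 0) * (a m / real m)"
      by (intro tendsto_intros)
    ultimately have eventually_above_y:
      "\<forall>\<^sub>F n in sequentially. y < (1 - real m / real n) * (a m / real m)"
      by (intro order_tendstoD) simp_all
    have below: "(1 - real m / real n) * (a m / real m) \<le> a n / real n" if "0 < n" for n
    proof -
      have "(1 - real m / real n) * (a m / real m) = (real n - real m) * a m / (real m * real n)"
        using \<open>0 < m\<close> that by (simp add: field_simps)
      also have "\<dots> \<le> real m * a n / (real m * real n)"
        using superadditive_lower_bound[OF superadditive nonneg \<open>0 < m\<close>]
        by (rule divide_right_mono) simp
      also have "\<dots> = a n / real n"
        using \<open>0 < m\<close> by simp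
      finally show ?thesis .
    qed
    show "\<forall>\<^sub>F n in sequentially. y < a n / real n"
      using eventually_above_y eventually_gt_at_top[of 0] by eventually_elim (meson below less_le_trans)
  next
    fix y
    assume Sup_below_y: "(SUP n\<in>{0<..}. a n / real n) < y"
    have above: "a n / real n \<le> (SUP n\<in>{0<..}. a n / real n)" if "0 < n" for n
      using bdd that by (intro cSUP_upper) auto
    show "\<forall>\<^sub>F n in sequentially. a n / real n < y"
      using eventually_gt_at_top[of 0] by eventually_elim (meson Sup_below_y above le_less_trans)
  qed
qed

lemma superadditive_ratio_le_lim:
  fixes a :: "nat \<Rightarrow> real"
  assumes superadditive: "\<And>m n. a m + a n \<le> a (m + n)" and nonneg: "\<And>n. 0 \<le> a n"
    and bounded: "\<And>n. a n \<le> c * real n" and "0 < m"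
  shows "a m / real m \<le> lim (\<lambda>n. a n / real n)"
proof -
  have "a m / real m \<le> (SUP n\<in>{0<..}. a n / real n)"
    using bounded \<open>0 < m\<close> by (intro cSUP_upper bdd_aboveI[of _ c]) (auto simp: divide_le_eq mult.commute)
  then show ?thesis
    using fekete_superadditive[OF assms(1-3)] by (simp add: limI)
qed

theorem tendsto_lim_truncated_superadditive:
  fixes a :: "nat \<Rightarrow> real" and b :: "nat \<Rightarrow> nat \<Rightarrow> real"
  assumes a_superadditive: "\<And>m n. a m + a n \<le> a (m + n)" and a_nonneg: "\<And>n. 0 \<le> a n"
    and a_bounded: "\<And>n. a n \<le> c * real n"
    and b_superadditive: "\<And>r m n. b r m + b r n \<le> b r (m + n)" and b_nonneg: "\<And>r n. 0 \<le> b r n"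
    and b_le_a: "\<And>r n. b r n \<le> a n" and b_eq_a: "\<And>r. b r (Suc r) = a (Suc r)"
  shows "(\<lambda>r. lim (\<lambda>n. b r n / real n)) \<longlonglongrightarrow> lim (\<lambda>n. a n / real n)"
proof (rule tendsto_sandwich)
  have b_bounded: "b r n \<le> c * real n" for r n
    using b_le_a a_bounded order_trans by blast
  have a_convergent: "(\<lambda>n. a n / real n) \<longlonglongrightarrow> lim (\<lambda>n. a n / real n)"
    using fekete_superadditive[OF a_superadditive a_nonneg a_bounded] by (metis limI)
  have b_convergent: "(\<lambda>n. b r n / real n) \<longlonglongrightarrow> lim (\<lambda>n. b r n / real n)" for r
    using fekete_superadditive[OF b_superadditive b_nonneg b_bounded] by (metis limI)
  have "lim (\<lambda>n. b r n / real n) \<le> lim (\<lambda>n. a n / real n)" for r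
    using b_convergent a_convergent by (rule LIMSEQ_le) (auto intro!: divide_right_mono b_le_a)
  then show "\<forall>\<^sub>F r in sequentially. lim (\<lambda>n. b r n / real n) \<le> lim (\<lambda>n. a n / real n)"
    by simp
  have "a (Suc r) / real (Suc r) \<le> lim (\<lambda>n. b r n / real n)" for r
    using superadditive_ratio_le_lim[OF b_superadditive b_nonneg b_bounded, of "Suc r" r]
    by (simp add: b_eq_a)
  then show "\<forall>\<^sub>F r in sequentially. a (Suc r) / real (Suc r) \<le> lim (\<lambda>n. b r n / real n)"
    by simp
  show "(\<lambda>r. a (Suc r) / real (Suc r)) \<longlonglongrightarrow> lim (\<lambda>n. a n / real n)"
    using a_convergent by (rule LIMSEQ_Suc)
qed (rule tendsto_const)

section \<open>Common subsequences within a window\<close>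

definition restrict_grid :: "nat \<Rightarrow> (nat \<Rightarrow> nat \<Rightarrow> bool) \<Rightarrow> nat \<Rightarrow> nat \<Rightarrow> bool" where
  "restrict_grid n e i j \<longleftrightarrow> e i j \<and> i \<in> {1..n} \<and> j \<in> {1..n}"

definition shift_grid :: "nat \<Rightarrow> (nat \<Rightarrow> nat \<Rightarrow> 'a) \<Rightarrow> nat \<Rightarrow> nat \<Rightarrow> 'a" where
  "shift_grid n e i j = e (i + n) (j + n)"

lemma cs_ok_length_le:
  assumes "cs_ok n P m I J"
  shows "m \<le> n"
proof -
  have increasing: "I a < I b" if "a < b" "b < m" for a b
    using assms that unfolding cs_ok_def by blast
  have "inj_on I {..<m}"
  proof (rule inj_onI)
    fix a b assume "a \<in> {..<m}" "b \<in> {..<m}" "I a = I b"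
    then show "a = b"
      using increasing[of a b] increasing[of b a] by (cases a b rule: linorder_cases) auto
  qed
  moreover have "I ` {..<m} \<subseteq> {1..n}"
    using assms unfolding cs_ok_def by auto
  ultimately have "card {..<m} \<le> card {1..n}"
    by (intro card_inj_on_le) auto
  then show ?thesis
    by simp
qed

lemma finite_window_lengths:
  "finite {m. \<exists>I J. cs_ok n P m I J \<and> (\<forall>a<m. \<bar>int (I a) - int (J a)\<bar> \<le> int r)}"
  by (rule finite_subset[of _ "{..n}"]) (auto dest: cs_ok_length_le)

lemma lcsPr_ge:
  assumes "cs_ok n P m I J" "\<forall>a<m. \<bar>int (I a) - int (J a)\<bar> \<le> int r"
  shows "m \<le> lcsPr n r P"
  unfolding lcsPr_def using assms finite_window_lengths by (intro Max_ge) auto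

lemma lcsPr_witness:
  obtains I J where "cs_ok n P (lcsPr n r P) I J"
    "\<forall>a<lcsPr n r P. \<bar>int (I a) - int (J a)\<bar> \<le> int r"
proof -
  have "cs_ok n P 0 I J" for I J
    by (simp add: cs_ok_def)
  then have "lcsPr n r P \<in> {m. \<exists>I J. cs_ok n P m I J \<and> (\<forall>a<m. \<bar>int (I a) - int (J a)\<bar> \<le> int r)}"
    unfolding lcsPr_def using finite_window_lengths by (intro Max_in) blast+
  then show ?thesis
    using that by blast
qed

lemma lcsPr_le: "lcsPr n r P \<le> n"
  by (metis lcsPr_witness cs_ok_length_le)

lemma lcsPr_eq_lcsP:
  assumes "n \<le> r + 1"
  shows "lcsPr n r P = lcsP n P"
proof -
  have "\<bar>int (I a) - int (J a)\<bar> \<le> int r" if "cs_ok n P m I J" "a < m" for m I J a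
    using that assms unfolding cs_ok_def by fastforce
  then have "{m. \<exists>I J. cs_ok n P m I J \<and> (\<forall>a<m. \<bar>int (I a) - int (J a)\<bar> \<le> int r)}
      = {m. \<exists>I J. cs_ok n P m I J}"
    by blast
  then show ?thesis
    unfolding lcsPr_def lcsP_def by simp
qed

lemma lcsPr_le_lcsP: "lcsPr n r P \<le> lcsP n P"
proof -
  obtain I J where "cs_ok n P (lcsPr n r P) I J"
    by (rule lcsPr_witness)
  then have "lcsPr n r P \<le> lcsPr n n P"
    by (intro lcsPr_ge) (auto simp: cs_ok_def)
  then show ?thesis
    by (simp add: lcsPr_eq_lcsP)
qed

lemma lcsPr_cong:
  assumes "\<And>i j. i \<in> {1..n} \<Longrightarrow> j \<in> {1..n} \<Longrightarrow> P i j = Q i j"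
  shows "lcsPr n r P = lcsPr n r Q"
proof -
  have "cs_ok n P m I J = cs_ok n Q m I J" for m I J
    using assms unfolding cs_ok_def by auto
  then show ?thesis
    by (simp add: lcsPr_def)
qed

lemma lcsPr_restrict_grid: "lcsPr n r (restrict_grid n e) = lcsPr n r e"
  by (rule lcsPr_cong) (simp add: restrict_grid_def)

lemma lcsPr_superadditive:
  "lcsPr n r P + lcsPr m r (shift_grid n P) \<le> lcsPr (n + m) r P"
proof -
  define l1 l2 where "l1 = lcsPr n r P" and "l2 = lcsPr m r (shift_grid n P)"
  obtain I1 J1 where w1: "cs_ok n P l1 I1 J1" "\<forall>a<l1. \<bar>int (I1 a) - int (J1 a)\<bar> \<le> int r"
    unfolding l1_def by (rule lcsPr_witness)
  obtain I2 J2 where w2: "cs_ok m (shift_grid n P) l2 I2 J2" "\<forall>a<l2. \<bar>int (I2 a) - int (J2 a)\<bar> \<le> int r"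
    unfolding l2_def by (rule lcsPr_witness)
  define I where "I a = (if a < l1 then I1 a else I2 (a - l1) + n)" for a
  define J where "J a = (if a < l1 then J1 a else J2 (a - l1) + n)" for a
  have in_grid: "1 \<le> I a \<and> I a \<le> n + m \<and> 1 \<le> J a \<and> J a \<le> n + m \<and> P (I a) (J a)"
    if "a < l1 + l2" for a
  proof (cases "a < l1")
    case True
    then show ?thesis
      using w1(1) unfolding cs_ok_def I_def J_def by auto
  next
    case False
    then have "a - l1 < l2"
      using that by simp
    then show ?thesis
      using w2(1) False unfolding cs_ok_def I_def J_def shift_grid_def by auto
  qed
  have increasing: "I a < I b \<and> J a < J b" if "a < b" "b < l1 + l2" for a b
  proof -
    consider "b < l1" | "a < l1" "\<not> b < l1" | "\<not> a < l1"
      using that by linarith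
    then show ?thesis
    proof cases
      case 1
      then show ?thesis
        using w1(1) that unfolding cs_ok_def I_def J_def by auto
    next
      case 2
      then have "b - l1 < l2"
        using that by simp
      then show ?thesis
        using w1(1) w2(1) 2 unfolding cs_ok_def I_def J_def by fastforce
    next
      case 3
      then have "a - l1 < b - l1" "b - l1 < l2"
        using that by simp_all
      then show ?thesis
        using w2(1) 3 that unfolding cs_ok_def I_def J_def by auto
    qed
  qed
  have "cs_ok (n + m) P (l1 + l2) I J"
    unfolding cs_ok_def using in_grid increasing by blast
  moreover have "\<forall>a<l1 + l2. \<bar>int (I a) - int (J a)\<bar> \<le> int r"
    using w1(2) w2(2) unfolding I_def J_def by auto
  ultimately show ?thesis
    unfolding l1_def l2_def by (rule lcsPr_ge)
qed

lemma lcsP_le: "lcsP n P \<le> n"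
  using lcsPr_le[of n n P] by (simp add: lcsPr_eq_lcsP)

lemma lcsP_restrict_grid: "lcsP n (restrict_grid n e) = lcsP n e"
  using lcsPr_restrict_grid[of n n e] by (simp add: lcsPr_eq_lcsP)

lemma lcsP_superadditive: "lcsP n P + lcsP m (shift_grid n P) \<le> lcsP (n + m) P"
  using lcsPr_superadditive[of n "n + m" P m] by (simp add: lcsPr_eq_lcsP)

section \<open>Block-consistent random matching matrices\<close>

text \<open>Blocks are compared after restriction to the grid because the matrices of the string model
  are not supported on it: list indexing beyond the end yields unspecified values.\<close>
definition block_consistent :: "(nat \<Rightarrow> (nat \<Rightarrow> nat \<Rightarrow> bool) pmf) \<Rightarrow> bool" where
  "block_consistent M \<longleftrightarrow> (\<forall>n m.
     map_pmf (restrict_grid n) (M (n + m)) = map_pmf (restrict_grid n) (M n) \<and>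
     map_pmf (restrict_grid m \<circ> shift_grid n) (M (n + m)) = map_pmf (restrict_grid m) (M m))"

lemma integrable_of_nat_bounded:
  assumes "\<And>x. f x \<le> c"
  shows "integrable (measure_pmf M) (\<lambda>x. real (f x))"
  using assms by (intro measure_pmf.integrable_const_bound[where B = c]) auto

lemma expectation_upper_left_block:
  fixes f :: "(nat \<Rightarrow> nat \<Rightarrow> bool) \<Rightarrow> real"
  assumes "block_consistent M" and "\<And>e. f (restrict_grid n e) = f e"
  shows "measure_pmf.expectation (M n) f = measure_pmf.expectation (M (n + m)) f"
proof -
  have "measure_pmf.expectation (map_pmf (restrict_grid n) (M n)) f
      = measure_pmf.expectation (map_pmf (restrict_grid n) (M (n + m))) f"
    using assms(1) by (simp only: block_consistent_def)
  then show ?thesis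
    by (simp add: assms(2))
qed

lemma expectation_lower_right_block:
  fixes f :: "(nat \<Rightarrow> nat \<Rightarrow> bool) \<Rightarrow> real"
  assumes "block_consistent M" and "\<And>e. f (restrict_grid m e) = f e"
  shows "measure_pmf.expectation (M m) f = measure_pmf.expectation (M (n + m)) (\<lambda>e. f (shift_grid n e))"
proof -
  have "measure_pmf.expectation (map_pmf (restrict_grid m) (M m)) f
      = measure_pmf.expectation (map_pmf (restrict_grid m \<circ> shift_grid n) (M (n + m))) f"
    using assms(1) by (simp only: block_consistent_def)
  then show ?thesis
    by (simp add: assms(2))
qed

lemma expectation_superadditive:
  fixes F :: "nat \<Rightarrow> (nat \<Rightarrow> nat \<Rightarrow> bool) \<Rightarrow> nat"
  assumes consistent: "block_consistent M"
    and grid_local: "\<And>n e. F n (restrict_grid n e) = F n e"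
    and superadditive: "\<And>n m e. F n e + F m (shift_grid n e) \<le> F (n + m) e"
    and bounded: "\<And>n e. F n e \<le> n"
  shows "measure_pmf.expectation (M n) (\<lambda>e. real (F n e))
      + measure_pmf.expectation (M m) (\<lambda>e. real (F m e))
      \<le> measure_pmf.expectation (M (n + m)) (\<lambda>e. real (F (n + m) e))"
proof -
  have integrable: "integrable (measure_pmf M') (\<lambda>e. real (F k (h e)))" for M' k h
    using bounded by (rule integrable_of_nat_bounded)
  have "measure_pmf.expectation (M n) (\<lambda>e. real (F n e))
      + measure_pmf.expectation (M m) (\<lambda>e. real (F m e))
      = measure_pmf.expectation (M (n + m)) (\<lambda>e. real (F n e + F m (shift_grid n e)))"
    using expectation_upper_left_block[OF consistent, of "\<lambda>e. real (F n e)" n m]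
      expectation_lower_right_block[OF consistent, of "\<lambda>e. real (F m e)" m n]
      integrable[of _ n id] integrable[of _ m "shift_grid n"]
    by (simp add: grid_local)
  also have "\<dots> \<le> measure_pmf.expectation (M (n + m)) (\<lambda>e. real (F (n + m) e))"
  proof (rule integral_mono)
    show "integrable (M (n + m)) (\<lambda>e. real (F n e + F m (shift_grid n e)))"
      using bounded by (intro integrable_of_nat_bounded[where c = "n + m"]) (simp add: add_mono)
    show "integrable (M (n + m)) (\<lambda>e. real (F (n + m) e))"
      using bounded by (rule integrable_of_nat_bounded)
    show "real (F n e + F m (shift_grid n e)) \<le> real (F (n + m) e)" for e
      by (simp only: of_nat_le_iff superadditive)
  qed
  finally show ?thesis .
qed

theorem block_consistent_tendsto_lim:
  assumes "block_consistent M"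
  shows "(\<lambda>r. lim (\<lambda>n. measure_pmf.expectation (M n) (\<lambda>e. real (lcsPr n r e)) / real n))
    \<longlonglongrightarrow> lim (\<lambda>n. measure_pmf.expectation (M n) (\<lambda>e. real (lcsP n e)) / real n)"
proof (rule tendsto_lim_truncated_superadditive[where c = 1])
  fix r m n :: nat
  show "measure_pmf.expectation (M m) (\<lambda>e. real (lcsP m e))
      + measure_pmf.expectation (M n) (\<lambda>e. real (lcsP n e))
      \<le> measure_pmf.expectation (M (m + n)) (\<lambda>e. real (lcsP (m + n) e))"
    using assms lcsP_restrict_grid lcsP_superadditive lcsP_le by (rule expectation_superadditive)
  show "measure_pmf.expectation (M m) (\<lambda>e. real (lcsPr m r e))
      + measure_pmf.expectation (M n) (\<lambda>e. real (lcsPr n r e))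
      \<le> measure_pmf.expectation (M (m + n)) (\<lambda>e. real (lcsPr (m + n) r e))"
    using assms lcsPr_restrict_grid lcsPr_superadditive lcsPr_le by (rule expectation_superadditive)
  show "0 \<le> measure_pmf.expectation (M n) (\<lambda>e. real (lcsP n e))"
    "0 \<le> measure_pmf.expectation (M n) (\<lambda>e. real (lcsPr n r e))"
    by simp_all
  show "measure_pmf.expectation (M n) (\<lambda>e. real (lcsP n e)) \<le> 1 * real n"
    using lcsP_le by (intro measure_pmf.integral_le_const integrable_of_nat_bounded) auto
  show "measure_pmf.expectation (M n) (\<lambda>e. real (lcsPr n r e))
      \<le> measure_pmf.expectation (M n) (\<lambda>e. real (lcsP n e))"
    using lcsPr_le lcsP_le by (intro integral_mono integrable_of_nat_bounded) (auto simp: lcsPr_le_lcsP)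
  show "measure_pmf.expectation (M (Suc r)) (\<lambda>e. real (lcsPr (Suc r) r e))
      = measure_pmf.expectation (M (Suc r)) (\<lambda>e. real (lcsP (Suc r) e))"
    by (simp add: lcsPr_eq_lcsP)
qed

section \<open>The Bernoulli matching model\<close>

definition bernoulli_matching :: "real \<Rightarrow> nat \<Rightarrow> (nat \<Rightarrow> nat \<Rightarrow> bool) pmf" where
  "bernoulli_matching p n = map_pmf curry (Pi_pmf ({1..n} \<times> {1..n}) False (\<lambda>_. bernoulli_pmf p))"

lemma map_restrict_grid_bernoulli_matching:
  assumes "n \<le> N"
  shows "map_pmf (restrict_grid n) (bernoulli_matching p N) = bernoulli_matching p n"
proof -
  have "map_pmf (restrict_grid n) (bernoulli_matching p N)
      = map_pmf (\<lambda>f. curry (\<lambda>x. if x \<in> {1..n} \<times> {1..n} then f x else False))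
          (Pi_pmf ({1..N} \<times> {1..N}) False (\<lambda>_. bernoulli_pmf p))"
    unfolding bernoulli_matching_def map_pmf_comp
    by (rule map_pmf_cong) (auto simp: restrict_grid_def fun_eq_iff)
  also have "\<dots> = bernoulli_matching p n"
    using assms unfolding bernoulli_matching_def
    by (subst Pi_pmf_subset[of "{1..N} \<times> {1..N}"]) (auto simp: map_pmf_comp)
  finally show ?thesis .
qed

lemma map_shift_grid_bernoulli_matching:
  "map_pmf (restrict_grid m \<circ> shift_grid n) (bernoulli_matching p (n + m)) = bernoulli_matching p m"
proof -
  define block where "block = {n + 1..n + m} \<times> {n + 1..n + m}"
  define h where "h = (\<lambda>(i, j). (i + n, j + n))"
  have "bij_betw h ({1..m} \<times> {1..m}) block"
    unfolding block_def h_def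
    by (rule bij_betwI[where g = "\<lambda>(i, j). (i - n, j - n)"]) auto
  moreover have "h x \<notin> block" if "x \<notin> {1..m} \<times> {1..m}" for x
    using that unfolding block_def h_def by (cases x) auto
  ultimately have "Pi_pmf ({1..m} \<times> {1..m}) False (\<lambda>_. bernoulli_pmf p)
      = map_pmf (\<lambda>g. g \<circ> h) (Pi_pmf block False (\<lambda>_. bernoulli_pmf p))"
    by (intro Pi_pmf_bij_betw) auto
  also have "Pi_pmf block False (\<lambda>_. bernoulli_pmf p)
      = map_pmf (\<lambda>f x. if x \<in> block then f x else False)
          (Pi_pmf ({1..n + m} \<times> {1..n + m}) False (\<lambda>_. bernoulli_pmf p))"
    unfolding block_def by (intro Pi_pmf_subset) auto
  finally have "bernoulli_matching p m
      = map_pmf (\<lambda>f. curry ((\<lambda>x. if x \<in> block then f x else False) \<circ> h))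
          (Pi_pmf ({1..n + m} \<times> {1..n + m}) False (\<lambda>_. bernoulli_pmf p))"
    by (simp add: bernoulli_matching_def map_pmf_comp o_def)
  also have "(\<lambda>f. curry ((\<lambda>x. if x \<in> block then f x else False) \<circ> h))
      = restrict_grid m \<circ> shift_grid n \<circ> curry"
    by (auto simp: fun_eq_iff block_def h_def restrict_grid_def shift_grid_def)
  finally show ?thesis
    by (simp add: bernoulli_matching_def map_pmf_comp o_def)
qed

lemma block_consistent_bernoulli_matching: "block_consistent (bernoulli_matching p)"
  unfolding block_consistent_def
  by (simp add: map_restrict_grid_bernoulli_matching map_shift_grid_bernoulli_matching)

lemma bmats_eq_image_Pow: "bmats n = (\<lambda>S i j. (i, j) \<in> S) ` Pow ({1..n} \<times> {1..n})"
proof (rule set_eqI, rule iffI)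
  fix e
  assume "e \<in> bmats n"
  then show "e \<in> (\<lambda>S i j. (i, j) \<in> S) ` Pow ({1..n} \<times> {1..n})"
    by (intro image_eqI[of _ _ "{(i, j). e i j}"]) (auto simp: bmats_def)
qed (auto simp: bmats_def)

lemma finite_bmats: "finite (bmats n)"
  by (simp add: bmats_eq_image_Pow)

lemma set_pmf_bernoulli_matching: "set_pmf (bernoulli_matching p n) \<subseteq> bmats n"
  using set_Pi_pmf_subset[of "{1..n} \<times> {1..n}" False "\<lambda>_. bernoulli_pmf p"]
  by (auto simp: bernoulli_matching_def bmats_def)

lemma pmf_bernoulli_matching:
  assumes "e \<in> bmats n"
  shows "pmf (bernoulli_matching (1 / real k) n) e = bweight k n e"
proof -
  define p where "p = 1 / real k"
  define grid where "grid = {1..n} \<times> {1..n}"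
  have p: "0 \<le> p" "p \<le> 1"
    by (auto simp: p_def divide_le_eq_1)
  have "inj curry"
    by (rule injI) (metis case_prod_curry)
  then have "pmf (bernoulli_matching p n) e = pmf (Pi_pmf grid False (\<lambda>_. bernoulli_pmf p)) (case_prod e)"
    using pmf_map_inj'[of curry _ "case_prod e"] by (simp add: bernoulli_matching_def grid_def)
  also have "\<dots> = (\<Prod>x\<in>grid. if case_prod e x then p else 1 - p)"
    using assms p by (subst pmf_Pi') (auto simp: grid_def bmats_def intro!: prod.cong)
  also have "\<dots> = p ^ card (grid \<inter> {x. case_prod e x}) * (1 - p) ^ card (grid \<inter> - {x. case_prod e x})"
    by (simp add: prod.If_cases grid_def)
  also have "card (grid \<inter> - {x. case_prod e x}) = n * n - card (grid \<inter> {x. case_prod e x})"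
  proof -
    have "grid \<inter> - {x. case_prod e x} = grid - (grid \<inter> {x. case_prod e x})"
      by blast
    then show ?thesis
      by (simp add: card_Diff_subset grid_def)
  qed
  also have "grid \<inter> {x. case_prod e x} = {(i, j). i \<in> {1..n} \<and> j \<in> {1..n} \<and> e i j}"
    by (auto simp: grid_def)
  finally show ?thesis
    by (simp add: bweight_def Let_def p_def)
qed

lemma sum_bweight_eq_expectation:
  "(\<Sum>e\<in>bmats n. bweight k n e * f e) = measure_pmf.expectation (bernoulli_matching (1 / real k) n) f"
  using set_pmf_bernoulli_matching
  by (subst integral_measure_pmf_real[OF finite_bmats]) (auto simp: pmf_bernoulli_matching mult.commute intro!: sum.cong)

lemma ELBr_eq_expectation:
  "ELBr n k r = measure_pmf.expectation (bernoulli_matching (1 / real k) n) (\<lambda>e. real (lcsPr n r e))"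
  by (simp add: ELBr_def sum_bweight_eq_expectation)

lemma ELB_eq_expectation:
  "ELB k n = measure_pmf.expectation (bernoulli_matching (1 / real k) n) (\<lambda>e. real (lcsP n e))"
  by (simp add: ELB_def sum_bweight_eq_expectation)

section \<open>Pairs of random strings\<close>

definition matching :: "nat list \<Rightarrow> nat list \<Rightarrow> nat \<Rightarrow> nat \<Rightarrow> bool" where
  "matching u v = (\<lambda>i j. u ! (i - 1) = v ! (j - 1))"

definition string_matching :: "nat \<Rightarrow> nat \<Rightarrow> (nat \<Rightarrow> nat \<Rightarrow> bool) pmf" where
  "string_matching k n =
     map_pmf (\<lambda>(u, v). matching u v) (pair_pmf (pmf_of_set (strs k n)) (pmf_of_set (strs k n)))"

lemma strs_eq_lists: "strs k n = {xs. set xs \<subseteq> {..<k} \<and> length xs = n}"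
  by (auto simp: strs_def)

lemma finite_strs: "finite (strs k n)"
  by (simp add: strs_eq_lists finite_lists_length_eq)

lemma card_strs: "card (strs k n) = k ^ n"
  by (simp add: strs_eq_lists card_lists_length_eq)

lemma length_strs: "u \<in> strs k n \<Longrightarrow> length u = n"
  by (simp add: strs_def)

lemma strs_nonempty: "0 < k \<Longrightarrow> strs k n \<noteq> {}"
  by (auto simp: strs_def intro!: exI[of _ "replicate n 0"])

lemma pmf_of_set_Times:
  assumes "finite A" "A \<noteq> {}" "finite B" "B \<noteq> {}"
  shows "pmf_of_set (A \<times> B) = pair_pmf (pmf_of_set A) (pmf_of_set B)"
proof (rule pmf_eqI)
  fix x :: "'a \<times> 'b"
  show "pmf (pmf_of_set (A \<times> B)) x = pmf (pair_pmf (pmf_of_set A) (pmf_of_set B)) x"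
    by (cases x) (simp add: assms pmf_pair card_cartesian_product split: split_indicator)
qed

lemma expectation_string_matching:
  assumes "0 < k"
  shows "measure_pmf.expectation (string_matching k n) f
    = (\<Sum>u\<in>strs k n. \<Sum>v\<in>strs k n. f (matching u v)) / real k ^ (2 * n)"
proof -
  have "pair_pmf (pmf_of_set (strs k n)) (pmf_of_set (strs k n)) = pmf_of_set (strs k n \<times> strs k n)"
    using assms by (simp add: pmf_of_set_Times finite_strs strs_nonempty)
  then show ?thesis
    using assms
    by (simp add: string_matching_def integral_pmf_of_set finite_strs strs_nonempty card_strs
        card_cartesian_product sum.cartesian_product case_prod_unfold power_mult power2_eq_square
        flip: power_mult_distrib)
qed

lemma pmf_of_set_strs_add:
  assumes "0 < k"
  shows "pmf_of_set (strs k (n + m))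
    = map_pmf (\<lambda>(u, w). u @ w) (pair_pmf (pmf_of_set (strs k n)) (pmf_of_set (strs k m)))"
proof -
  have "bij_betw (\<lambda>(u, w). u @ w) (strs k n \<times> strs k m) (strs k (n + m))"
    by (rule bij_betwI[where g = "\<lambda>w. (take n w, drop n w)"])
      (auto simp: strs_def dest: in_set_takeD in_set_dropD)
  then have "map_pmf (\<lambda>(u, w). u @ w) (pmf_of_set (strs k n \<times> strs k m)) = pmf_of_set (strs k (n + m))"
    using assms by (intro map_pmf_of_set_bij_betw) (auto simp: finite_strs strs_nonempty)
  then show ?thesis
    using assms by (simp add: pmf_of_set_Times finite_strs strs_nonempty)
qed

lemma map_take_pmf_of_set_strs:
  assumes "0 < k"
  shows "map_pmf (take n) (pmf_of_set (strs k (n + m))) = pmf_of_set (strs k n)"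
proof -
  have "map_pmf (take n) (pmf_of_set (strs k (n + m)))
      = map_pmf fst (pair_pmf (pmf_of_set (strs k n)) (pmf_of_set (strs k m)))"
    unfolding pmf_of_set_strs_add[OF assms] map_pmf_comp
    using assms by (intro map_pmf_cong) (auto simp: set_pair_pmf finite_strs strs_nonempty length_strs)
  then show ?thesis
    by (simp add: map_fst_pair_pmf)
qed

lemma map_drop_pmf_of_set_strs:
  assumes "0 < k"
  shows "map_pmf (drop n) (pmf_of_set (strs k (n + m))) = pmf_of_set (strs k m)"
proof -
  have "map_pmf (drop n) (pmf_of_set (strs k (n + m)))
      = map_pmf snd (pair_pmf (pmf_of_set (strs k n)) (pmf_of_set (strs k m)))"
    unfolding pmf_of_set_strs_add[OF assms] map_pmf_comp
    using assms by (intro map_pmf_cong) (auto simp: set_pair_pmf finite_strs strs_nonempty length_strs)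
  then show ?thesis
    by (simp add: map_snd_pair_pmf)
qed

lemma restrict_grid_matching_take:
  "restrict_grid n (matching (take n u) (take n v)) = restrict_grid n (matching u v)"
  by (auto simp: fun_eq_iff restrict_grid_def matching_def)

lemma restrict_grid_matching_drop:
  assumes "n \<le> length u" "n \<le> length v"
  shows "restrict_grid m (matching (drop n u) (drop n v)) = restrict_grid m (shift_grid n (matching u v))"
  using assms by (auto simp: fun_eq_iff restrict_grid_def shift_grid_def matching_def add.commute)

lemma map_restrict_grid_string_matching:
  assumes "0 < k"
  shows "map_pmf (restrict_grid n) (string_matching k (n + m)) = map_pmf (restrict_grid n) (string_matching k n)"
proof -
  let ?U = "pmf_of_set (strs k (n + m))"
  have "map_pmf (restrict_grid n) (string_matching k (n + m))
      = map_pmf (\<lambda>(u, v). restrict_grid n (matching u v))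
          (map_pmf (\<lambda>(u, v). (take n u, take n v)) (pair_pmf ?U ?U))"
    by (simp add: string_matching_def map_pmf_comp case_prod_unfold restrict_grid_matching_take)
  also have "map_pmf (\<lambda>(u, v). (take n u, take n v)) (pair_pmf ?U ?U)
      = pair_pmf (pmf_of_set (strs k n)) (pmf_of_set (strs k n))"
    using assms by (simp add: map_pair map_take_pmf_of_set_strs)
  also have "map_pmf (\<lambda>(u, v). restrict_grid n (matching u v)) \<dots>
      = map_pmf (restrict_grid n) (string_matching k n)"
    by (simp add: string_matching_def map_pmf_comp case_prod_unfold)
  finally show ?thesis .
qed

lemma map_shift_grid_string_matching:
  assumes "0 < k"
  shows "map_pmf (restrict_grid m \<circ> shift_grid n) (string_matching k (n + m))
    = map_pmf (restrict_grid m) (string_matching k m)"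
proof -
  let ?U = "pmf_of_set (strs k (n + m))"
  have "map_pmf (restrict_grid m \<circ> shift_grid n) (string_matching k (n + m))
      = map_pmf (\<lambda>(u, v). restrict_grid m (matching u v))
          (map_pmf (\<lambda>(u, v). (drop n u, drop n v)) (pair_pmf ?U ?U))"
    unfolding string_matching_def map_pmf_comp
    using assms
    by (intro map_pmf_cong)
      (auto simp: set_pair_pmf finite_strs strs_nonempty length_strs restrict_grid_matching_drop)
  also have "map_pmf (\<lambda>(u, v). (drop n u, drop n v)) (pair_pmf ?U ?U)
      = pair_pmf (pmf_of_set (strs k m)) (pmf_of_set (strs k m))"
    using assms by (simp add: map_pair map_drop_pmf_of_set_strs)
  also have "map_pmf (\<lambda>(u, v). restrict_grid m (matching u v)) \<dots>
      = map_pmf (restrict_grid m) (string_matching k m)"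
    by (simp add: string_matching_def map_pmf_comp case_prod_unfold)
  finally show ?thesis .
qed

lemma block_consistent_string_matching: "0 < k \<Longrightarrow> block_consistent (string_matching k)"
  by (simp add: block_consistent_def map_restrict_grid_string_matching map_shift_grid_string_matching)

lemma ELr_eq_expectation:
  assumes "0 < k"
  shows "ELr n k r = measure_pmf.expectation (string_matching k n) (\<lambda>e. real (lcsPr n r e))"
  using assms
  by (simp add: expectation_string_matching ELr_def Lr_def matching_def length_strs cong: sum.cong)

lemma EL_eq_expectation:
  assumes "0 < k"
  shows "EL k n = measure_pmf.expectation (string_matching k n) (\<lambda>e. real (lcsP n e))"
  using assms
  by (simp add: expectation_string_matching EL_def L_def matching_def length_strs cong: sum.cong)

theorem mainTheorem1:
  fixes k :: nat
  assumes "k \<ge> 2"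
  shows "(\<lambda>r. gammaB_r k r) \<longlonglongrightarrow> gammaB k \<and> (\<lambda>r. gamma_r k r) \<longlonglongrightarrow> gamma k"
proof
  show "(\<lambda>r. gammaB_r k r) \<longlonglongrightarrow> gammaB k"
    using block_consistent_tendsto_lim[OF block_consistent_bernoulli_matching]
    by (simp add: gammaB_r_def gammaB_def ELBr_eq_expectation ELB_eq_expectation)
  have "0 < k"
    using assms by simp
  then show "(\<lambda>r. gamma_r k r) \<longlonglongrightarrow> gamma k"
    using block_consistent_tendsto_lim[OF block_consistent_string_matching]
    by (simp add: gamma_r_def gamma_def ELr_eq_expectation EL_eq_expectation)
qed

end
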